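(* Fix $\lambda^\sharp>0$ and let $(\gamma^\sharp,\lambda^\sharp)$ and $(\gamma^\flat,\lambda^\sharp)$ be two eligible pairs. Then $\|\Sigma_{-1,-1}^{1/2}(\gamma^\sharp-\gamma^\flat)\|_2^2\to0$.
   Context: Asymptotic framework: all quantities may depend on $n$; limits as $n\to\infty$. $\mathbf{x}=(\mathbf{x}_1,\dots,\mathbf{x}_p)$ is a zero-mean Gaussian row vector with nonsingular covariance $\Sigma$; $\mathbf{x}_{-1}=(\mathbf{x}_2,\dots,\mathbf{x}_p)$, $\Sigma_{-1,-1}=\mathbb{E}\mathbf{x}_{-1}^T\mathbf{x}_{-1}$, $\gamma^0:=\Sigma_{-1,-1}^{-1}\mathbb{E}\mathbf{x}_{-1}^T\mathbf{x}_1$. A pair $(\gamma,\lambda)$ with $\gamma\in\mathbb{R}^{p-1}$, $\lambda>0$ is eligible if $\|\Sigma_{-1,-1}(\gamma-\gamma^0)\|_\infty\le\lambda$ and $\lambda\|\gamma\|_1\to0$. *)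

theory Defs
  imports "HOL-Analysis.Analysis"
begin

(* Conventions: the p x p covariance matrix Sigma is a function nat => nat => real
   on indices {0..<p}; index 0 is coordinate x_1, indices {1..<p} are x_{-1}.
   Vectors in R^{p-1} are functions nat => real, only their values on {1..<p} matter. *)

definition quad_form :: "nat set \<Rightarrow> (nat \<Rightarrow> nat \<Rightarrow> real) \<Rightarrow> (nat \<Rightarrow> real) \<Rightarrow> real" where
  "quad_form I S v = (\<Sum>i\<in>I. \<Sum>j\<in>I. v i * S i j * v j)"

(* symmetric positive definite p x p matrix = covariance of a nonsingular Gaussian vector *)
definition nonsingular_cov :: "nat \<Rightarrow> (nat \<Rightarrow> nat \<Rightarrow> real) \<Rightarrow> bool" where
  "nonsingular_cov p S \<longleftrightarrow>
     (\<forall>i<p. \<forall>j<p. S i j = S j i) \<and>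
     (\<forall>v. (\<exists>i<p. v i \<noteq> 0) \<longrightarrow> quad_form {..<p} S v > 0)"

(* gamma^0 = Sigma_{-1,-1}^{-1} E x_{-1}^T x_1, i.e. the unique solution g (supported on
   {1..<p}) of Sigma_{-1,-1} g = Sigma_{-1,1} *)
definition gamma0 :: "nat \<Rightarrow> (nat \<Rightarrow> nat \<Rightarrow> real) \<Rightarrow> nat \<Rightarrow> real" where
  "gamma0 p S = (THE g. (\<forall>j. j \<notin> {1..<p} \<longrightarrow> g j = 0) \<and>
                         (\<forall>i\<in>{1..<p}. (\<Sum>j\<in>{1..<p}. S i j * g j) = S i 0))"

definition l1norm :: "nat \<Rightarrow> (nat \<Rightarrow> real) \<Rightarrow> real" where
  "l1norm p g = (\<Sum>j\<in>{1..<p}. \<bar>g j\<bar>)"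

definition eligible_at :: "nat \<Rightarrow> (nat \<Rightarrow> nat \<Rightarrow> real) \<Rightarrow> (nat \<Rightarrow> real) \<Rightarrow> real \<Rightarrow> bool" where
  "eligible_at p S g l \<longleftrightarrow> l > 0 \<and>
     (\<forall>i\<in>{1..<p}. \<bar>\<Sum>j\<in>{1..<p}. S i j * (g j - gamma0 p S j)\<bar> \<le> l)"

definition eligible ::
  "(nat \<Rightarrow> nat) \<Rightarrow> (nat \<Rightarrow> nat \<Rightarrow> nat \<Rightarrow> real) \<Rightarrow> (nat \<Rightarrow> nat \<Rightarrow> real) \<Rightarrow> (nat \<Rightarrow> real) \<Rightarrow> bool" where
  "eligible p S g l \<longleftrightarrow> (\<forall>n. eligible_at (p n) (S n) (g n) (l n)) \<and>
     (\<lambda>n. l n * l1norm (p n) (g n)) \<longlonglongrightarrow> 0"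

end

theory Submission
  imports Defs
begin

text \<open>Write \<open>A\<close> for \<open>\<Sigma>_{-1,-1}\<close>. Both residuals \<open>A(\<gamma> - \<gamma>\<^sup>0)\<close> are bounded by \<open>\<lambda>\<close>
  in sup-norm, so \<open>A(\<gamma>\<^sup>\<sharp> - \<gamma>\<^sup>\<flat>)\<close> is bounded by \<open>2\<lambda>\<close>; pairing it with
  \<open>\<gamma>\<^sup>\<sharp> - \<gamma>\<^sup>\<flat>\<close> (Hoelder with exponents 1 and \<open>\<infinity>\<close>) bounds the quadratic form by
  \<open>2\<lambda>(\<parallel>\<gamma>\<^sup>\<sharp>\<parallel>\<^sub>1 + \<parallel>\<gamma>\<^sup>\<flat>\<parallel>\<^sub>1)\<close>, which tends to 0 by eligibility.\<close>

lemma abs_quad_form_le: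
  fixes S :: "nat \<Rightarrow> nat \<Rightarrow> real" and v :: "nat \<Rightarrow> real"
  assumes "\<And>i. i \<in> I \<Longrightarrow> \<bar>\<Sum>j\<in>I. S i j * v j\<bar> \<le> c"
  shows "\<bar>quad_form I S v\<bar> \<le> c * (\<Sum>i\<in>I. \<bar>v i\<bar>)"
proof -
  have "quad_form I S v = (\<Sum>i\<in>I. v i * (\<Sum>j\<in>I. S i j * v j))"
    unfolding quad_form_def sum_distrib_left by (simp add: mult.assoc)
  also have "\<bar>\<dots>\<bar> \<le> (\<Sum>i\<in>I. \<bar>v i\<bar> * \<bar>\<Sum>j\<in>I. S i j * v j\<bar>)"
    unfolding abs_mult[symmetric] by (rule sum_abs)
  also have "\<dots> \<le> (\<Sum>i\<in>I. \<bar>v i\<bar> * c)"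
    using assms by (intro sum_mono mult_left_mono) auto
  finally show ?thesis by (simp add: sum_distrib_left mult.commute)
qed

lemma eligible_at_residual_diff_le:
  assumes "eligible_at p S g l" "eligible_at p S h l" "i \<in> {1..<p}"
  shows "\<bar>\<Sum>j\<in>{1..<p}. S i j * (g j - h j)\<bar> \<le> 2 * l"
proof -
  let ?r = "\<lambda>f. \<Sum>j\<in>{1..<p}. S i j * (f j - gamma0 p S j)"
  have "(\<Sum>j\<in>{1..<p}. S i j * (g j - h j)) = ?r g - ?r h"
    unfolding sum_subtractf[symmetric] by (rule sum.cong) (auto simp: algebra_simps)
  moreover have "\<bar>?r g\<bar> \<le> l" "\<bar>?r h\<bar> \<le> l"
    using assms unfolding eligible_at_def by auto
  ultimately show ?thesis by linarith
qed

lemma l1norm_diff_le: "(\<Sum>j\<in>{1..<p}. \<bar>g j - h j\<bar>) \<le> l1norm p g + l1norm p h"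
  unfolding l1norm_def sum.distrib[symmetric] by (intro sum_mono) linarith

lemma eligible_at_quad_form_diff_le:
  assumes "eligible_at p S g l" "eligible_at p S h l"
  shows "\<bar>quad_form {1..<p} S (\<lambda>j. g j - h j)\<bar> \<le> 2 * (l * l1norm p g + l * l1norm p h)"
proof -
  have "l > 0" using assms(1) by (simp add: eligible_at_def)
  have "\<bar>quad_form {1..<p} S (\<lambda>j. g j - h j)\<bar> \<le> 2 * l * (\<Sum>j\<in>{1..<p}. \<bar>g j - h j\<bar>)"
    using eligible_at_residual_diff_le[OF assms] by (rule abs_quad_form_le)
  also have "\<dots> \<le> 2 * l * (l1norm p g + l1norm p h)"
    using \<open>l > 0\<close> l1norm_diff_le by (intro mult_left_mono) auto
  finally show ?thesis by (simp add: algebra_simps)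
qed

theorem lemma3p1:
  fixes p :: "nat \<Rightarrow> nat"
    and \<Sigma> :: "nat \<Rightarrow> nat \<Rightarrow> nat \<Rightarrow> real"
    and gs gf :: "nat \<Rightarrow> nat \<Rightarrow> real"
    and ls :: "nat \<Rightarrow> real"
  assumes "\<And>n. nonsingular_cov (p n) (\<Sigma> n)"
    and "\<And>n. ls n > 0"
    and "eligible p \<Sigma> gs ls"
    and "eligible p \<Sigma> gf ls"
  shows "(\<lambda>n. quad_form {1..<p n} (\<Sigma> n) (\<lambda>j. gs n j - gf n j)) \<longlonglongrightarrow> 0"
proof (rule Lim_null_comparison)
  have "(\<lambda>n. ls n * l1norm (p n) (gs n)) \<longlonglongrightarrow> 0"
    and "(\<lambda>n. ls n * l1norm (p n) (gf n)) \<longlonglongrightarrow> 0"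
    using assms(3,4) by (auto simp: eligible_def)
  then show "(\<lambda>n. 2 * (ls n * l1norm (p n) (gs n) + ls n * l1norm (p n) (gf n))) \<longlonglongrightarrow> 0"
    using tendsto_mult_right_zero tendsto_add_zero by blast
  show "\<forall>\<^sub>F n in sequentially. norm (quad_form {1..<p n} (\<Sigma> n) (\<lambda>j. gs n j - gf n j))
      \<le> 2 * (ls n * l1norm (p n) (gs n) + ls n * l1norm (p n) (gf n))"
    using assms(3,4) unfolding eligible_def real_norm_def
    by (intro always_eventually allI eligible_at_quad_form_diff_le) auto
qed

end
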